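(* Let the bat graph be the graph obtained from an induced cycle $C_4$ on vertices $u_1,u_2,u_3,u_4$ and four vertex-disjoint copies of $K_{2,4}$ by identifying, for each $i$, one vertex of the part of size $4$ of the $i$-th copy with $u_i$. In every $B_1$-EPG representation of the bat graph, the $C_4$ on $u_1,u_2,u_3,u_4$ is represented by a square-frame.
   Context: A grid is the set of integer points of the plane; a grid edge joins two grid points at distance $1$. A path in the grid is a sequence of distinct grid edges in which consecutive edges share exactly one grid point and non-consecutive edges share none; a bend is a pair of consecutive edges with different directions (horizontal/vertical), and the bend point is their common grid point. An EPG representation of $G$ is a family $(P_v)_{v\in V(G)}$ of grid paths such that distinct $u,v$ are adjacent iff $P_u,P_v$ share a grid edge; it is $B_1$-EPG if every path has at most one bend. A one-bend path has shape $\llcorner$, $\lrcorner$, $\ulcorner$ or $\urcorner$ according to which two directions leave its bend point ($\llcorner$: up and right; $\lrcorner$: up and left; $\ulcorner$: down and right; $\urcorner$: down and left). A frame is a set of four paths $P_1,\dots,P_4$, each with its bend at a different corner of an axis-parallel rectangle, such that $P_1\cap P_2$, $P_1\cap P_3$, $P_2\cap P_4$, $P_3\cap P_4$ each contain at least one grid edge, while $P_1\cap P_4$ and $P_2\cap P_3$ contain no grid edge. A square-frame is a frame on a rectangle with corners $(x_1,y_1),(x_2,y_1),(x_1,y_2),(x_2,y_2)$, $x_1<x_2$, $y_1<y_2$, in which $P_1,P_2,P_3,P_4$ have bend points $(x_1,y_1),(x_2,y_1),(x_1,y_2),(x_2,y_2)$ and shapes $\llcorner,\lrcorner,\ulcorner,\urcorner$,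 respectively. *)

theory Defs
  imports Main
begin

type_synonym gpoint = "int \<times> int"
type_synonym gedge = "gpoint set"
type_synonym gpath = "gedge list"

definition grid_edge :: "gedge \<Rightarrow> bool" where
  "grid_edge e \<longleftrightarrow> (\<exists>p q. e = {p, q} \<and> \<bar>fst p - fst q\<bar> + \<bar>snd p - snd q\<bar> = 1)"

definition horizontal :: "gedge \<Rightarrow> bool" where
  "horizontal e \<longleftrightarrow> (\<exists>p q. e = {p, q} \<and> p \<noteq> q \<and> snd p = snd q)"

definition grid_path :: "gpath \<Rightarrow> bool" where
  "grid_path es \<longleftrightarrow> es \<noteq> [] \<and> distinct es \<and> (\<forall>e\<in>set es. grid_edge e) \<and>
     (\<forall>i. Suc i < length es \<longrightarrow> card (es ! i \<inter> es ! Suc i) = 1) \<and>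
     (\<forall>i j. Suc i < j \<and> j < length es \<longrightarrow> es ! i \<inter> es ! j = {})"

definition num_bends :: "gpath \<Rightarrow> nat" where
  "num_bends es = card {i. Suc i < length es \<and> horizontal (es ! i) \<noteq> horizontal (es ! Suc i)}"

definition shares_edge :: "gpath \<Rightarrow> gpath \<Rightarrow> bool" where
  "shares_edge P Q \<longleftrightarrow> set P \<inter> set Q \<noteq> {}"

definition mv :: "gpoint \<Rightarrow> int \<times> int \<Rightarrow> gpoint" where
  "mv b d = (fst b + fst d, snd b + snd d)"

abbreviation "dir_up \<equiv> ((0::int), (1::int))"
abbreviation "dir_down \<equiv> ((0::int), (-1::int))"
abbreviation "dir_right \<equiv> ((1::int), (0::int))"
abbreviation "dir_left \<equiv> ((-1::int), (0::int))"

definition bend_at :: "gpath \<Rightarrow> gpoint \<Rightarrow> int \<times> int \<Rightarrow> int \<times> int \<Rightarrow> bool" where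
  "bend_at P b d1 d2 \<longleftrightarrow> (\<exists>i. Suc i < length P \<and>
      {P ! i, P ! Suc i} = {{b, mv b d1}, {b, mv b d2}})"

definition square_frame :: "gpath \<Rightarrow> gpath \<Rightarrow> gpath \<Rightarrow> gpath \<Rightarrow> bool" where
  "square_frame P1 P2 P3 P4 \<longleftrightarrow> (\<exists>x1 x2 y1 y2. x1 < x2 \<and> y1 < y2 \<and>
     bend_at P1 (x1, y1) dir_up dir_right \<and>
     bend_at P2 (x2, y1) dir_up dir_left \<and>
     bend_at P3 (x1, y2) dir_down dir_right \<and>
     bend_at P4 (x2, y2) dir_down dir_left \<and>
     shares_edge P1 P2 \<and> shares_edge P1 P3 \<and> shares_edge P2 P4 \<and> shares_edge P3 P4 \<and>
     \<not> shares_edge P1 P4 \<and> \<not> shares_edge P2 P3)"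

text \<open>Bat graph. Vertices U i (i<4) form the induced C4 (u_1..u_4 = U 0..U 3).
  Copy i of K_{2,4}: part of size 2 is A i 0, A i 1; part of size 4 is U i, B i 1, B i 2, B i 3.\<close>
datatype bat_vertex = U nat | A nat nat | B nat nat

definition bat_V :: "bat_vertex set" where
  "bat_V = {U i | i. i < 4} \<union> {A i j | i j. i < 4 \<and> j < 2} \<union> {B i k | i k. i < 4 \<and> 1 \<le> k \<and> k \<le> 3}"

fun bat_adj0 :: "bat_vertex \<Rightarrow> bat_vertex \<Rightarrow> bool" where
  "bat_adj0 (U i) (U j) = (j = (i + 1) mod 4)"
| "bat_adj0 (A i j) (U k) = (k = i)"
| "bat_adj0 (A i j) (B k l) = (k = i)"
| "bat_adj0 _ _ = False"

definition bat_adj :: "bat_vertex \<Rightarrow> bat_vertex \<Rightarrow> bool" where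
  "bat_adj u v \<longleftrightarrow> u \<in> bat_V \<and> v \<in> bat_V \<and> (bat_adj0 u v \<or> bat_adj0 v u)"

definition B1_EPG_rep :: "'v set \<Rightarrow> ('v \<Rightarrow> 'v \<Rightarrow> bool) \<Rightarrow> ('v \<Rightarrow> gpath) \<Rightarrow> bool" where
  "B1_EPG_rep V adj P \<longleftrightarrow>
     (\<forall>v\<in>V. grid_path (P v) \<and> num_bends (P v) \<le> 1) \<and>
     (\<forall>u\<in>V. \<forall>v\<in>V. u \<noteq> v \<longrightarrow> (adj u v \<longleftrightarrow> shares_edge (P u) (P v)))"

end

theory Submission
  imports Defs
begin

(* A grid path with at most one bend is an L-shape: a horizontal run of unit edges and a vertical
   run meeting at the bend point, which is an end of both runs; two such paths share a grid edge
   iff their horizontal runs overlap on a common row or their vertical runs on a common column.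
   This reduces the theorem to linear integer arithmetic on six coordinates per vertex.
   In the i-th copy of K_{2,4}, the path of u_i must bend, and both of its edges at the bend lie
   in the paths of the part of size 2. The cycle neighbours of u_i are not adjacent to that part,
   so they avoid both bend edges of u_i. Four bent paths forming an induced C_4 in which
   neighbours avoid each other's bend edges are forced into a square-frame. *)

definition hedge :: "int \<Rightarrow> int \<Rightarrow> gedge" where
  "hedge i y = {(i, y), (i + 1, y)}"

definition vedge :: "int \<Rightarrow> int \<Rightarrow> gedge" where
  "vedge x j = {(x, j), (x, j + 1)}"

lemma hedge_eq_iff [simp]: "hedge i y = hedge i' y' \<longleftrightarrow> i = i' \<and> y = y'"
  unfolding hedge_def by (auto simp: doubleton_eq_iff)

lemma vedge_eq_iff [simp]: "vedge x j = vedge x' j' \<longleftrightarrow> x = x' \<and> j = j'"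
  unfolding vedge_def by (auto simp: doubleton_eq_iff)

lemma hedge_neq_vedge [simp]: "hedge i y \<noteq> vedge x j" "vedge x j \<noteq> hedge i y"
  unfolding hedge_def vedge_def by (auto simp: doubleton_eq_iff)

lemma horizontal_hedge [simp]: "horizontal (hedge i y)"
  unfolding horizontal_def hedge_def by force

lemma not_horizontal_vedge [simp]: "\<not> horizontal (vedge x j)"
  unfolding horizontal_def vedge_def by (auto simp: doubleton_eq_iff)

lemma grid_edge_cases:
  assumes "grid_edge e"
  obtains i y where "e = hedge i y" | x j where "e = vedge x j"
proof -
  obtain a b c d where e: "e = {(a, b), (c, d)}" and dist: "\<bar>a - c\<bar> + \<bar>b - d\<bar> = 1"
    using assms unfolding grid_edge_def by auto
  then consider "b = d" "c = a + 1" | "b = d" "a = c + 1" | "a = c" "d = b + 1" | "a = c" "b = d + 1"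
    by linarith
  then show thesis
    using that unfolding e hedge_def vedge_def by cases (metis insert_commute)+
qed

lemma card_hedge_Int_hedge:
  assumes "card (hedge i y \<inter> hedge i' y') = 1"
  shows "y' = y \<and> (i' = i + 1 \<or> i' = i - 1)"
proof (rule ccontr)
  assume "\<not> ?thesis"
  then have "hedge i y \<inter> hedge i' y' = {} \<or> hedge i y \<inter> hedge i' y' = hedge i y"
    unfolding hedge_def by auto
  moreover have "card (hedge i y) = 2"
    unfolding hedge_def by simp
  ultimately show False
    using assms by auto
qed

lemma card_vedge_Int_vedge:
  assumes "card (vedge x j \<inter> vedge x' j') = 1"
  shows "x' = x \<and> (j' = j + 1 \<or> j' = j - 1)"
proof (rule ccontr)
  assume "\<not> ?thesis"
  then have "vedge x j \<inter> vedge x' j' = {} \<or> vedge x j \<inter> vedge x' j' = vedge x j"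
    unfolding vedge_def by auto
  moreover have "card (vedge x j) = 2"
    unfolding vedge_def by simp
  ultimately show False
    using assms by auto
qed

lemma grid_path_drop:
  assumes "grid_path es" "n < length es"
  shows "grid_path (drop n es)"
  unfolding grid_path_def
proof (intro conjI allI impI)
  show "drop n es \<noteq> []" "distinct (drop n es)" "\<forall>e\<in>set (drop n es). grid_edge e"
    using assms unfolding grid_path_def by (auto dest: in_set_dropD)
next
  fix i assume "Suc i < length (drop n es)"
  then show "card (drop n es ! i \<inter> drop n es ! Suc i) = 1"
    using assms(1) unfolding grid_path_def by (auto simp: nth_drop)
next
  fix i j assume "Suc i < j \<and> j < length (drop n es)"
  then have "Suc (n + i) < n + j \<and> n + j < length es"
    by auto
  then show "drop n es ! i \<inter> drop n es ! j = {}"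
    using assms(1) unfolding grid_path_def by (simp add: nth_drop)
qed

lemma grid_path_take:
  assumes "grid_path es" "0 < n"
  shows "grid_path (take n es)"
  unfolding grid_path_def
proof (intro conjI allI impI)
  show "take n es \<noteq> []" "distinct (take n es)" "\<forall>e\<in>set (take n es). grid_edge e"
    using assms unfolding grid_path_def by (auto dest: in_set_takeD)
next
  fix i assume "Suc i < length (take n es)"
  then show "card (take n es ! i \<inter> take n es ! Suc i) = 1"
    using assms(1) unfolding grid_path_def by auto
next
  fix i j assume "Suc i < j \<and> j < length (take n es)"
  then show "take n es ! i \<inter> take n es ! j = {}"
    using assms(1) unfolding grid_path_def by auto
qed

lemma grid_path_common_point:
  assumes "grid_path es" "i < j" "j < length es" "p \<in> es ! i" "p \<in> es ! j"
  shows "j = Suc i"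
  using assms unfolding grid_path_def by (metis disjoint_iff Suc_lessI)

lemma grid_path_at_most_two_edges_at_point:
  assumes gp: "grid_path es" and "e1 \<in> set es" "e2 \<in> set es" "e3 \<in> set es"
    and "p \<in> e1" "p \<in> e2" "p \<in> e3"
  shows "e1 = e2 \<or> e1 = e3 \<or> e2 = e3"
proof -
  obtain i1 i2 i3 where i: "i1 < length es" "i2 < length es" "i3 < length es"
    and e: "e1 = es ! i1" "e2 = es ! i2" "e3 = es ! i3"
    using assms(2-4) by (metis in_set_conv_nth)
  have adj: "i = j \<or> j = Suc i \<or> i = Suc j"
    if "i < length es" "j < length es" "p \<in> es ! i" "p \<in> es ! j" for i j
    using grid_path_common_point[OF gp] that by (metis linorder_neqE_nat)
  have "i1 = i2 \<or> i1 = i3 \<or> i2 = i3"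
    using adj[of i1 i2] adj[of i1 i3] adj[of i2 i3] i assms(5-7) e by auto
  then show ?thesis using e by auto
qed

(* f i c is the i-th unit edge on the c-th line of a family of parallel grid lines. *)
lemma straight_grid_path:
  fixes f :: "int \<Rightarrow> int \<Rightarrow> gedge"
  assumes "grid_path es"
    and "\<forall>e\<in>set es. \<exists>i c. e = f i c"
    and f_inj: "\<And>i c i' c'. f i c = f i' c' \<Longrightarrow> i = i' \<and> c = c'"
    and f_meet: "\<And>i c i' c'. card (f i c \<inter> f i' c') = 1 \<Longrightarrow> c' = c \<and> (i' = i + 1 \<or> i' = i - 1)"
  shows "\<exists>c lo hi. lo < hi \<and> set es = (\<lambda>i. f i c) ` {lo..<hi}"
  using assms(1,2)
proof (induction es)
  case Nil
  then show ?case by (simp add: grid_path_def)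
next
  case (Cons e es)
  obtain i c where e: "e = f i c"
    using Cons.prems(2) by auto
  show ?case
  proof (cases "es = []")
    case True
    then have "set (e # es) = (\<lambda>k. f k c) ` {i..<i + 1}"
      using e by auto
    then show ?thesis
      by (intro exI[of _ c] exI[of _ i] exI[of _ "i + 1"]) simp
  next
    case False
    then have "grid_path es"
      using grid_path_drop[OF Cons.prems(1), of 1] by simp
    then obtain c' lo hi where "lo < hi" and run: "set es = (\<lambda>k. f k c') ` {lo..<hi}"
      using Cons.IH Cons.prems(2) by auto
    have mem: "f k c' \<in> set es \<longleftrightarrow> k \<in> {lo..<hi}" for k
      using run by (auto dest: f_inj)
    obtain m where m: "es ! 0 = f m c'" "m \<in> {lo..<hi}"
      using False run by (metis imageE length_greater_0_conv nth_mem)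
    have "card (f i c \<inter> f m c') = 1"
      using Cons.prems(1) False e m(1) unfolding grid_path_def by fastforce
    then have c: "c' = c" and "m = i + 1 \<or> m = i - 1"
      using f_meet by blast+
    moreover have "i \<notin> {lo..<hi}"
      using Cons.prems(1) mem e c unfolding grid_path_def by auto
    ultimately have "i = lo - 1 \<or> i = hi"
      using m(2) by auto
    then obtain lo' hi' where "lo' < hi'" "insert i {lo..<hi} = {lo'..<hi'}"
    proof
      assume "i = lo - 1"
      then show thesis
        using \<open>lo < hi\<close> by (intro that[of "lo - 1" hi]) auto
    next
      assume "i = hi"
      then show thesis
        using \<open>lo < hi\<close> by (intro that[of lo "hi + 1"]) auto
    qed
    moreover have "set (e # es) = (\<lambda>k. f k c) ` insert i {lo..<hi}"
      using run e c by simp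
    ultimately show ?thesis
      by auto
  qed
qed

definition hseg :: "int \<Rightarrow> int \<Rightarrow> int \<Rightarrow> gedge set" where
  "hseg y lo hi = (\<lambda>i. hedge i y) ` {lo..<hi}"

definition vseg :: "int \<Rightarrow> int \<Rightarrow> int \<Rightarrow> gedge set" where
  "vseg x lo hi = (\<lambda>j. vedge x j) ` {lo..<hi}"

lemma hedge_in_hseg_iff [simp]: "hedge i y' \<in> hseg y lo hi \<longleftrightarrow> y' = y \<and> lo \<le> i \<and> i < hi"
  unfolding hseg_def by auto

lemma vedge_in_vseg_iff [simp]: "vedge x' j \<in> vseg x lo hi \<longleftrightarrow> x' = x \<and> lo \<le> j \<and> j < hi"
  unfolding vseg_def by auto

lemma hedge_notin_vseg [simp]: "hedge i y \<notin> vseg x lo hi"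
  unfolding vseg_def by auto

lemma vedge_notin_hseg [simp]: "vedge x j \<notin> hseg y lo hi"
  unfolding hseg_def by auto

lemma horizontal_grid_path:
  assumes "grid_path es" "\<forall>e\<in>set es. horizontal e"
  shows "\<exists>y lo hi. lo < hi \<and> set es = hseg y lo hi"
proof -
  have "\<forall>e\<in>set es. \<exists>i y. e = hedge i y"
    using assms unfolding grid_path_def by (metis grid_edge_cases not_horizontal_vedge)
  from straight_grid_path[OF assms(1) this] show ?thesis
    unfolding hseg_def using card_hedge_Int_hedge by auto
qed

lemma vertical_grid_path:
  assumes "grid_path es" "\<forall>e\<in>set es. \<not> horizontal e"
  shows "\<exists>x lo hi. lo < hi \<and> set es = vseg x lo hi"
proof -
  have "\<forall>e\<in>set es. \<exists>j x. e = vedge x j"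
    using assms unfolding grid_path_def by (metis grid_edge_cases horizontal_hedge)
  from straight_grid_path[where f = "\<lambda>j x. vedge x j", OF assms(1) this] show ?thesis
    unfolding vseg_def using card_vedge_Int_vedge by auto
qed

lemma eq_if_consecutive_eq:
  assumes "\<And>i. lo \<le> i \<Longrightarrow> i < k \<Longrightarrow> f i = f (Suc i)" "lo \<le> k"
  shows "f k = f lo"
  using assms by (induction k) (auto simp: le_Suc_eq)

lemma num_bends_le_1_cases:
  assumes "num_bends es \<le> 1"
  obtains h where "\<forall>e\<in>set es. horizontal e = h"
  | m h where "Suc m < length es" "\<forall>e\<in>set (take (Suc m) es). horizontal e = h"
      "\<forall>e\<in>set (drop (Suc m) es). horizontal e = (\<not> h)"
proof -
  let ?h = "\<lambda>i. horizontal (es ! i)"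
  define S where "S = {i. Suc i < length es \<and> ?h i \<noteq> ?h (Suc i)}"
  have "finite S"
    unfolding S_def by (rule finite_subset[of _ "{..<length es}"]) auto
  moreover have "card S \<le> 1"
    using assms unfolding S_def num_bends_def .
  ultimately have S_single: "\<forall>a\<in>S. \<forall>b\<in>S. a = b"
    using card_le_Suc0_iff_eq by auto
  show thesis
  proof (cases "S = {}")
    case True
    then have steady: "?h i = ?h (Suc i)" if "Suc i < length es" for i
      using that unfolding S_def by blast
    have "?h i = ?h 0" if "i < length es" for i
    proof (rule eq_if_consecutive_eq[where f = ?h])
      fix j assume "0 \<le> j" "j < i"
      then show "?h j = ?h (Suc j)"
        using that by (intro steady) simp
    qed simp
    then have "\<forall>e\<in>set es. horizontal e = ?h 0"
      by (metis in_set_conv_nth)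
    then show thesis
      using that(1) by blast
  next
    case False
    then obtain m where m: "m \<in> S" by blast
    then have steady: "?h i = ?h (Suc i)" if "Suc i < length es" "i \<noteq> m" for i
      using S_single that unfolding S_def by blast
    have "Suc m < length es" and bend: "?h (Suc m) \<noteq> ?h m"
      using m unfolding S_def by auto
    have before: "?h i = ?h 0" if "i \<le> m" for i
    proof (rule eq_if_consecutive_eq[where f = ?h])
      fix j assume "0 \<le> j" "j < i"
      then show "?h j = ?h (Suc j)"
        using that \<open>Suc m < length es\<close> by (intro steady) auto
    qed simp
    have after: "?h i = ?h (Suc m)" if "m < i" "i < length es" for i
    proof (rule eq_if_consecutive_eq[where f = ?h])
      fix j assume "Suc m \<le> j" "j < i"
      then show "?h j = ?h (Suc j)"
        using that by (intro steady) auto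
    qed (use that in simp)
    have "\<forall>e\<in>set (take (Suc m) es). horizontal e = ?h 0"
    proof
      fix e assume "e \<in> set (take (Suc m) es)"
      then obtain i where "i < Suc m" "e = es ! i"
        by (auto simp: in_set_conv_nth)
      then show "horizontal e = ?h 0"
        using before[of i] by simp
    qed
    moreover have "\<forall>e\<in>set (drop (Suc m) es). horizontal e = (\<not> ?h 0)"
    proof
      fix e assume "e \<in> set (drop (Suc m) es)"
      then obtain k where "k < length es - Suc m" "e = es ! Suc (m + k)"
        by (auto simp: in_set_conv_nth)
      then show "horizontal e = (\<not> ?h 0)"
        using after[of "Suc (m + k)"] before[of m] bend by auto
    qed
    ultimately show thesis
      using that(2) \<open>Suc m < length es\<close> by blast
  qed
qed

section \<open>One-bend paths as L-shapes\<close>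

(* A straight path is encoded with one empty run, its bend point being an end of the other. *)
record lshape =
  bend_x :: int
  bend_y :: int
  h_lo :: int
  h_hi :: int
  v_lo :: int
  v_hi :: int

definition wf_lshape :: "lshape \<Rightarrow> bool" where
  "wf_lshape s \<longleftrightarrow> h_lo s \<le> h_hi s \<and> (bend_x s = h_lo s \<or> bend_x s = h_hi s) \<and>
     v_lo s \<le> v_hi s \<and> (bend_y s = v_lo s \<or> bend_y s = v_hi s) \<and>
     (h_lo s < h_hi s \<or> v_lo s < v_hi s)"

definition lshape_edges :: "lshape \<Rightarrow> gedge set" where
  "lshape_edges s = hseg (bend_y s) (h_lo s) (h_hi s) \<union> vseg (bend_x s) (v_lo s) (v_hi s)"

definition lshape_of :: "gpath \<Rightarrow> lshape \<Rightarrow> bool" where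
  "lshape_of P s \<longleftrightarrow> wf_lshape s \<and> set P = lshape_edges s"

lemma lshape_of_hseg:
  assumes "set es = hseg y lo hi" "lo < hi"
  shows "lshape_of es \<lparr>bend_x = lo, bend_y = y, h_lo = lo, h_hi = hi, v_lo = y, v_hi = y\<rparr>"
  using assms unfolding lshape_of_def wf_lshape_def lshape_edges_def vseg_def by simp

lemma lshape_of_vseg:
  assumes "set es = vseg x lo hi" "lo < hi"
  shows "lshape_of es \<lparr>bend_x = x, bend_y = lo, h_lo = x, h_hi = x, v_lo = lo, v_hi = hi\<rparr>"
  using assms unfolding lshape_of_def wf_lshape_def lshape_edges_def hseg_def by simp

lemma lshape_of_corner:
  assumes gp: "grid_path es" and es: "set es = hseg y hl hr \<union> vseg x vl vr"
    and "hl < hr" "vl < vr"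
    and meet: "e \<in> hseg y hl hr" "e' \<in> vseg x vl vr" "e \<inter> e' \<noteq> {}"
  shows "lshape_of es \<lparr>bend_x = x, bend_y = y, h_lo = hl, h_hi = hr, v_lo = vl, v_hi = vr\<rparr>"
proof -
  obtain c b where e: "e = hedge c y" "hl \<le> c" "c < hr" and e': "e' = vedge x b" "vl \<le> b" "b < vr"
    using meet(1,2) unfolding hseg_def vseg_def by auto
  then have x: "x = c \<or> x = c + 1" and y: "y = b \<or> y = b + 1"
    using meet(3) unfolding hedge_def vedge_def by auto
  have three: "e1 = e2 \<or> e1 = e3 \<or> e2 = e3"
    if "e1 \<in> set es" "e2 \<in> set es" "e3 \<in> set es" "(x, y) \<in> e1" "(x, y) \<in> e2" "(x, y) \<in> e3"
    for e1 e2 e3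
    using grid_path_at_most_two_edges_at_point[OF gp that] .
  (* (x, y) is the common point of e and e'; inside a run it would lie on two edges of that run
     and on the meeting edge of the other run, i.e. on three edges of the path. *)
  have "\<not> (hl < x \<and> x < hr)"
  proof
    assume "hl < x \<and> x < hr"
    then have "hedge (x - 1) y \<in> set es" "hedge x y \<in> set es" "vedge x b \<in> set es"
      using es e' by auto
    moreover have "(x, y) \<in> hedge (x - 1) y" "(x, y) \<in> hedge x y" "(x, y) \<in> vedge x b"
      using y unfolding hedge_def vedge_def by auto
    ultimately show False
      using three[of "hedge (x - 1) y" "hedge x y" "vedge x b"] by simp
  qed
  moreover have "\<not> (vl < y \<and> y < vr)"
  proof
    assume "vl < y \<and> y < vr"
    then have "vedge x (y - 1) \<in> set es" "vedge x y \<in> set es" "hedge c y \<in> set es"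
      using es e by auto
    moreover have "(x, y) \<in> vedge x (y - 1)" "(x, y) \<in> vedge x y" "(x, y) \<in> hedge c y"
      using x unfolding hedge_def vedge_def by auto
    ultimately show False
      using three[of "vedge x (y - 1)" "vedge x y" "hedge c y"] by simp
  qed
  ultimately show ?thesis
    using x y e e' es \<open>hl < hr\<close> \<open>vl < vr\<close>
    unfolding lshape_of_def wf_lshape_def lshape_edges_def by auto
qed

lemma lshape_of_straight_union:
  assumes "grid_path es" "set es = set H \<union> set V"
    and "grid_path H" "\<forall>e\<in>set H. horizontal e" and "grid_path V" "\<forall>e\<in>set V. \<not> horizontal e"
    and "e \<in> set H" "e' \<in> set V" "e \<inter> e' \<noteq> {}"
  shows "\<exists>s. lshape_of es s"
proof -
  obtain y hl hr where H: "hl < hr" "set H = hseg y hl hr"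
    using horizontal_grid_path[OF assms(3,4)] by blast
  obtain x vl vr where V: "vl < vr" "set V = vseg x vl vr"
    using vertical_grid_path[OF assms(5,6)] by blast
  have "lshape_of es \<lparr>bend_x = x, bend_y = y, h_lo = hl, h_hi = hr, v_lo = vl, v_hi = vr\<rparr>"
    using assms(2,7-9) H V by (intro lshape_of_corner[OF assms(1)]) auto
  then show ?thesis ..
qed

theorem one_bend_grid_path_lshape:
  assumes gp: "grid_path es" and "num_bends es \<le> 1"
  shows "\<exists>s. lshape_of es s"
  using assms(2)
proof (cases rule: num_bends_le_1_cases)
  case (1 h)
  show ?thesis
  proof (cases h)
    case True
    then obtain y lo hi where "lo < hi" "set es = hseg y lo hi"
      using horizontal_grid_path[OF gp] 1 by blast
    then show ?thesis
      using lshape_of_hseg by blast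
  next
    case False
    then obtain x lo hi where "lo < hi" "set es = vseg x lo hi"
      using vertical_grid_path[OF gp] 1 by blast
    then show ?thesis
      using lshape_of_vseg by blast
  qed
next
  case (2 m h)
  define A where "A = take (Suc m) es"
  define B where "B = drop (Suc m) es"
  have A: "grid_path A" "\<forall>e\<in>set A. horizontal e = h"
    unfolding A_def using gp 2 by (auto intro: grid_path_take)
  have B: "grid_path B" "\<forall>e\<in>set B. horizontal e = (\<not> h)"
    unfolding B_def using gp 2 by (auto intro: grid_path_drop)
  have meet: "es ! m \<in> set A" "es ! Suc m \<in> set B" "es ! m \<inter> es ! Suc m \<noteq> {}"
  proof -
    show "es ! m \<in> set A"
      unfolding A_def using 2(1) by (auto simp: in_set_conv_nth intro!: exI[of _ m])
    show "es ! Suc m \<in> set B"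
      unfolding B_def using 2(1) by (auto simp: in_set_conv_nth intro!: exI[of _ 0])
    show "es ! m \<inter> es ! Suc m \<noteq> {}"
      using gp 2(1) unfolding grid_path_def by fastforce
  qed
  have "set es = set A \<union> set B"
    unfolding A_def B_def by (metis append_take_drop_id set_append)
  show ?thesis
  proof (cases h)
    case True
    show ?thesis
      using \<open>set es = set A \<union> set B\<close> A B True meet
      by (intro lshape_of_straight_union[OF gp]) auto
  next
    case False
    have "set es = set B \<union> set A" "es ! Suc m \<inter> es ! m \<noteq> {}"
      using \<open>set es = set A \<union> set B\<close> meet(3) by auto
    then show ?thesis
      using A B False meet(1,2)
      by (intro lshape_of_straight_union[OF gp]) auto
  qed
qed

section \<open>Shared edges and square-frames of L-shapes\<close>

definition has_hedge :: "lshape \<Rightarrow> int \<Rightarrow> int \<Rightarrow> bool" where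
  "has_hedge s i y \<longleftrightarrow> y = bend_y s \<and> h_lo s \<le> i \<and> i < h_hi s"

definition has_vedge :: "lshape \<Rightarrow> int \<Rightarrow> int \<Rightarrow> bool" where
  "has_vedge s x j \<longleftrightarrow> x = bend_x s \<and> v_lo s \<le> j \<and> j < v_hi s"

lemma hedge_in_lshape_edges_iff [simp]: "hedge i y \<in> lshape_edges s \<longleftrightarrow> has_hedge s i y"
  unfolding lshape_edges_def has_hedge_def by auto

lemma vedge_in_lshape_edges_iff [simp]: "vedge x j \<in> lshape_edges s \<longleftrightarrow> has_vedge s x j"
  unfolding lshape_edges_def has_vedge_def by auto

definition lshapes_overlap :: "lshape \<Rightarrow> lshape \<Rightarrow> bool" where
  "lshapes_overlap s t \<longleftrightarrow>
     (bend_y s = bend_y t \<and> h_lo s < h_hi t \<and> h_lo t < h_hi s \<and> h_lo s < h_hi s \<and> h_lo t < h_hi t) \<or>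
     (bend_x s = bend_x t \<and> v_lo s < v_hi t \<and> v_lo t < v_hi s \<and> v_lo s < v_hi s \<and> v_lo t < v_hi t)"

lemma lshape_edges_cases:
  assumes "e \<in> lshape_edges s"
  obtains i y where "e = hedge i y" "has_hedge s i y" | x j where "e = vedge x j" "has_vedge s x j"
  using assms unfolding lshape_edges_def hseg_def vseg_def has_hedge_def has_vedge_def by auto

lemma lshapes_overlap_iff_common_edge:
  "lshapes_overlap s t \<longleftrightarrow>
     (\<exists>i y. has_hedge s i y \<and> has_hedge t i y) \<or> (\<exists>x j. has_vedge s x j \<and> has_vedge t x j)"
proof
  assume "lshapes_overlap s t"
  then consider
      "bend_y s = bend_y t" "h_lo s < h_hi t" "h_lo t < h_hi s" "h_lo s < h_hi s" "h_lo t < h_hi t"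
    | "bend_x s = bend_x t" "v_lo s < v_hi t" "v_lo t < v_hi s" "v_lo s < v_hi s" "v_lo t < v_hi t"
    unfolding lshapes_overlap_def by blast
  then show "(\<exists>i y. has_hedge s i y \<and> has_hedge t i y) \<or> (\<exists>x j. has_vedge s x j \<and> has_vedge t x j)"
  proof cases
    case 1
    then have "has_hedge s (max (h_lo s) (h_lo t)) (bend_y s)"
      and "has_hedge t (max (h_lo s) (h_lo t)) (bend_y s)"
      unfolding has_hedge_def by auto
    then show ?thesis by blast
  next
    case 2
    then have "has_vedge s (bend_x s) (max (v_lo s) (v_lo t))"
      and "has_vedge t (bend_x s) (max (v_lo s) (v_lo t))"
      unfolding has_vedge_def by auto
    then show ?thesis by blast
  qed
qed (auto simp: lshapes_overlap_def has_hedge_def has_vedge_def)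

lemma shares_edge_iff_lshapes_overlap:
  assumes "lshape_of P s" "lshape_of Q t"
  shows "shares_edge P Q \<longleftrightarrow> lshapes_overlap s t"
proof -
  have "shares_edge P Q \<longleftrightarrow> (\<exists>e. e \<in> lshape_edges s \<and> e \<in> lshape_edges t)"
    using assms unfolding shares_edge_def lshape_of_def by auto
  also have "\<dots> \<longleftrightarrow> lshapes_overlap s t"
    unfolding lshapes_overlap_iff_common_edge
  proof
    assume "\<exists>e. e \<in> lshape_edges s \<and> e \<in> lshape_edges t"
    then obtain e where "e \<in> lshape_edges s" "e \<in> lshape_edges t"
      by blast
    then show "(\<exists>i y. has_hedge s i y \<and> has_hedge t i y) \<or> (\<exists>x j. has_vedge s x j \<and> has_vedge t x j)"
      by (cases rule: lshape_edges_cases) auto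
  qed (metis hedge_in_lshape_edges_iff vedge_in_lshape_edges_iff)
  finally show ?thesis .
qed

lemma edge_mv_dir [simp]:
  "{(x, y), mv (x, y) dir_right} = hedge x y"
  "{(x, y), mv (x, y) dir_left} = hedge (x - 1) y"
  "{(x, y), mv (x, y) dir_up} = vedge x y"
  "{(x, y), mv (x, y) dir_down} = vedge x (y - 1)"
  unfolding mv_def hedge_def vedge_def by auto

lemma bend_atI:
  assumes gp: "grid_path P" and "{b, mv b d1} \<in> set P" "{b, mv b d2} \<in> set P"
    and "{b, mv b d1} \<noteq> {b, mv b d2}"
  shows "bend_at P b d1 d2"
proof -
  obtain i j where ij: "i < length P" "j < length P" "P ! i = {b, mv b d1}" "P ! j = {b, mv b d2}"
    using assms(2,3) by (metis in_set_conv_nth)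
  then have "i \<noteq> j"
    using assms(4) by auto
  then have "j = Suc i \<or> i = Suc j"
    using grid_path_common_point[OF gp, of i j b] grid_path_common_point[OF gp, of j i b] ij
    by (auto simp: linorder_neq_iff)
  then show ?thesis
  proof
    assume "j = Suc i"
    then show ?thesis
      unfolding bend_at_def using ij by (intro exI[of _ i]) simp
  next
    assume "i = Suc j"
    then show ?thesis
      unfolding bend_at_def using ij by (intro exI[of _ j]) (simp add: insert_commute)
  qed
qed

definition lshape_square_frame :: "lshape \<Rightarrow> lshape \<Rightarrow> lshape \<Rightarrow> lshape \<Rightarrow> bool" where
  "lshape_square_frame s1 s2 s3 s4 \<longleftrightarrow>
     bend_x s1 < bend_x s2 \<and> bend_y s1 < bend_y s3 \<and>
     has_vedge s1 (bend_x s1) (bend_y s1) \<and> has_hedge s1 (bend_x s1) (bend_y s1) \<and>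
     has_vedge s2 (bend_x s2) (bend_y s1) \<and> has_hedge s2 (bend_x s2 - 1) (bend_y s1) \<and>
     has_vedge s3 (bend_x s1) (bend_y s3 - 1) \<and> has_hedge s3 (bend_x s1) (bend_y s3) \<and>
     has_vedge s4 (bend_x s2) (bend_y s3 - 1) \<and> has_hedge s4 (bend_x s2 - 1) (bend_y s3) \<and>
     lshapes_overlap s1 s2 \<and> lshapes_overlap s1 s3 \<and> lshapes_overlap s2 s4 \<and>
     lshapes_overlap s3 s4 \<and> \<not> lshapes_overlap s1 s4 \<and> \<not> lshapes_overlap s2 s3"

lemma square_frame_if_lshape_square_frame:
  assumes "grid_path P1" "grid_path P2" "grid_path P3" "grid_path P4"
    and "lshape_of P1 s1" "lshape_of P2 s2" "lshape_of P3 s3" "lshape_of P4 s4"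
    and frame: "lshape_square_frame s1 s2 s3 s4"
  shows "square_frame P1 P2 P3 P4"
proof -
  define x1 where "x1 = bend_x s1"
  define x2 where "x2 = bend_x s2"
  define y1 where "y1 = bend_y s1"
  define y2 where "y2 = bend_y s3"
  have edges: "set P1 = lshape_edges s1" "set P2 = lshape_edges s2"
    "set P3 = lshape_edges s3" "set P4 = lshape_edges s4"
    using assms(5-8) unfolding lshape_of_def by auto
  have "bend_at P1 (x1, y1) dir_up dir_right" "bend_at P2 (x2, y1) dir_up dir_left"
    "bend_at P3 (x1, y2) dir_down dir_right" "bend_at P4 (x2, y2) dir_down dir_left"
    using frame assms(1-4) unfolding lshape_square_frame_def x1_def x2_def y1_def y2_def
    by (auto intro!: bend_atI simp: edges)
  moreover have "x1 < x2" "y1 < y2"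
    using frame unfolding lshape_square_frame_def x1_def x2_def y1_def y2_def by auto
  ultimately show ?thesis
    using frame shares_edge_iff_lshapes_overlap assms(5-8)
    unfolding square_frame_def lshape_square_frame_def by blast
qed

section \<open>K_{2,4}, C_4 and the bat graph\<close>

definition has_bend :: "lshape \<Rightarrow> bool" where
  "has_bend s \<longleftrightarrow> h_lo s < h_hi s \<and> v_lo s < v_hi s"

(* The edges at the bend are hedge (bend_hcol s) (bend_y s) and vedge (bend_x s) (bend_vrow s). *)
definition bend_hcol :: "lshape \<Rightarrow> int" where
  "bend_hcol s = (if bend_x s = h_lo s then bend_x s else bend_x s - 1)"

definition bend_vrow :: "lshape \<Rightarrow> int" where
  "bend_vrow s = (if bend_y s = v_lo s then bend_y s else bend_y s - 1)"

definition bend_covered_by :: "lshape \<Rightarrow> lshape \<Rightarrow> lshape \<Rightarrow> bool" where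
  "bend_covered_by u a1 a2 \<longleftrightarrow> has_bend u \<and>
     (has_hedge a1 (bend_hcol u) (bend_y u) \<or> has_hedge a2 (bend_hcol u) (bend_y u)) \<and>
     (has_vedge a1 (bend_x u) (bend_vrow u) \<or> has_vedge a2 (bend_x u) (bend_vrow u))"

definition bend_edges_avoid :: "lshape \<Rightarrow> lshape \<Rightarrow> bool" where
  "bend_edges_avoid s t \<longleftrightarrow>
     \<not> has_hedge t (bend_hcol s) (bend_y s) \<and> \<not> has_vedge t (bend_x s) (bend_vrow s)"

(* On L-shapes this is a statement of linear integer arithmetic; the finite case analysis on the
   relative position of the runs is left to Z3. *)
lemma k24_bend_covered:
  assumes "wf_lshape u" "wf_lshape a1" "wf_lshape a2" "wf_lshape b1" "wf_lshape b2" "wf_lshape b3"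
    and "lshapes_overlap u a1" "lshapes_overlap u a2"
    and "lshapes_overlap b1 a1" "lshapes_overlap b1 a2"
    and "lshapes_overlap b2 a1" "lshapes_overlap b2 a2"
    and "lshapes_overlap b3 a1" "lshapes_overlap b3 a2"
    and "\<not> lshapes_overlap a1 a2"
    and "\<not> lshapes_overlap u b1" "\<not> lshapes_overlap u b2" "\<not> lshapes_overlap u b3"
    and "\<not> lshapes_overlap b1 b2" "\<not> lshapes_overlap b1 b3" "\<not> lshapes_overlap b2 b3"
  shows "bend_covered_by u a1 a2"
  using assms unfolding wf_lshape_def lshapes_overlap_def bend_covered_by_def has_bend_def
    has_hedge_def has_vedge_def bend_hcol_def bend_vrow_def
  by (smt (z3))

lemma bend_edges_avoid_if_covered:
  assumes "bend_covered_by u a1 a2" "\<not> lshapes_overlap w a1" "\<not> lshapes_overlap w a2"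
  shows "bend_edges_avoid u w"
  using assms unfolding bend_covered_by_def bend_edges_avoid_def lshapes_overlap_iff_common_edge
  by blast

lemma induced_c4_lshape_square_frame:
  fixes S :: "'v \<Rightarrow> lshape"
  assumes "wf_lshape (S a)" "wf_lshape (S b)" "wf_lshape (S c)" "wf_lshape (S d)"
    and "has_bend (S a)" "has_bend (S b)" "has_bend (S c)" "has_bend (S d)"
    and "lshapes_overlap (S a) (S b)" "lshapes_overlap (S b) (S c)"
    and "lshapes_overlap (S c) (S d)" "lshapes_overlap (S d) (S a)"
    and "\<not> lshapes_overlap (S a) (S c)" "\<not> lshapes_overlap (S b) (S d)"
    and "bend_edges_avoid (S a) (S b)" "bend_edges_avoid (S a) (S d)"
    and "bend_edges_avoid (S b) (S c)" "bend_edges_avoid (S b) (S a)"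
    and "bend_edges_avoid (S c) (S d)" "bend_edges_avoid (S c) (S b)"
    and "bend_edges_avoid (S d) (S a)" "bend_edges_avoid (S d) (S c)"
  shows "\<exists>p q r t. {p, q, r, t} = {a, b, c, d} \<and> lshape_square_frame (S p) (S q) (S r) (S t)"
proof -
  have "lshape_square_frame (S a) (S b) (S d) (S c) \<or> lshape_square_frame (S a) (S d) (S b) (S c) \<or>
      lshape_square_frame (S b) (S c) (S a) (S d) \<or> lshape_square_frame (S b) (S a) (S c) (S d) \<or>
      lshape_square_frame (S c) (S d) (S b) (S a) \<or> lshape_square_frame (S c) (S b) (S d) (S a) \<or>
      lshape_square_frame (S d) (S a) (S c) (S b) \<or> lshape_square_frame (S d) (S c) (S a) (S b)"
    using assms unfolding wf_lshape_def lshapes_overlap_def has_bend_def has_hedge_def has_vedge_def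
      bend_hcol_def bend_vrow_def bend_edges_avoid_def lshape_square_frame_def
    by (smt (z3))
  then show ?thesis
    by (elim disjE) (intro exI conjI[rotated], assumption, blast)+
qed

lemma B1_EPG_rep_lshapes:
  assumes "B1_EPG_rep V adj P"
  obtains S where "\<And>v. v \<in> V \<Longrightarrow> lshape_of (P v) (S v)"
    and "\<And>u v. u \<in> V \<Longrightarrow> v \<in> V \<Longrightarrow> u \<noteq> v \<Longrightarrow> lshapes_overlap (S u) (S v) \<longleftrightarrow> adj u v"
proof -
  have "\<forall>v\<in>V. \<exists>s. lshape_of (P v) s"
    using one_bend_grid_path_lshape assms unfolding B1_EPG_rep_def by blast
  then obtain S where S: "\<forall>v\<in>V. lshape_of (P v) (S v)"
    by (auto dest: bchoice)
  moreover have "lshapes_overlap (S u) (S v) \<longleftrightarrow> adj u v"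
    if "u \<in> V" "v \<in> V" "u \<noteq> v" for u v
    using shares_edge_iff_lshapes_overlap[of "P u" "S u" "P v" "S v"] S assms that
    unfolding B1_EPG_rep_def by auto
  ultimately show thesis
    using that by blast
qed

lemma bat_V_simps [simp]:
  "U i \<in> bat_V \<longleftrightarrow> i < 4"
  "A i j \<in> bat_V \<longleftrightarrow> i < 4 \<and> j < 2"
  "B i k \<in> bat_V \<longleftrightarrow> i < 4 \<and> 1 \<le> k \<and> k \<le> 3"
  unfolding bat_V_def by auto

lemma bat_lshape_square_frame:
  assumes wf: "\<And>v. v \<in> bat_V \<Longrightarrow> wf_lshape (S v)"
    and overlap: "\<And>u v. u \<in> bat_V \<Longrightarrow> v \<in> bat_V \<Longrightarrow> u \<noteq> v \<Longrightarrow>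
      lshapes_overlap (S u) (S v) \<longleftrightarrow> bat_adj u v"
  shows "\<exists>a b c d. {a, b, c, d} = {U 0, U 1, U 2, U 3} \<and>
    lshape_square_frame (S a) (S b) (S c) (S d)"
proof -
  have covered: "bend_covered_by (S (U i)) (S (A i 0)) (S (A i 1))" if "i < 4" for i
    by (rule k24_bend_covered[of _ _ _ "S (B i 1)" "S (B i 2)" "S (B i 3)"])
      (use that in \<open>simp_all add: wf overlap bat_adj_def\<close>)
  have avoid: "bend_edges_avoid (S (U i)) (S (U j))" if "i < 4" "j < 4" "i \<noteq> j" for i j
    by (rule bend_edges_avoid_if_covered[OF covered[OF that(1)]])
      (use that in \<open>simp_all add: overlap bat_adj_def\<close>)
  show ?thesis
    by (rule induced_c4_lshape_square_frame)
      (simp_all add: wf overlap avoid covered[unfolded bend_covered_by_def] bat_adj_def)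
qed

theorem corollary2p2:
  fixes P :: "bat_vertex \<Rightarrow> gpath"
  assumes "B1_EPG_rep bat_V bat_adj P"
  shows "\<exists>a b c d. {a, b, c, d} = {U 0, U 1, U 2, U 3} \<and> square_frame (P a) (P b) (P c) (P d)"
proof -
  obtain S where S: "\<And>v. v \<in> bat_V \<Longrightarrow> lshape_of (P v) (S v)"
    and overlap: "\<And>u v. u \<in> bat_V \<Longrightarrow> v \<in> bat_V \<Longrightarrow> u \<noteq> v \<Longrightarrow>
      lshapes_overlap (S u) (S v) \<longleftrightarrow> bat_adj u v"
    using B1_EPG_rep_lshapes[OF assms] by metis
  have wf: "wf_lshape (S v)" if "v \<in> bat_V" for v
    using S[OF that] unfolding lshape_of_def by blast
  obtain a b c d where abcd: "{a, b, c, d} = {U 0, U 1, U 2, U 3}"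
    and frame: "lshape_square_frame (S a) (S b) (S c) (S d)"
    using bat_lshape_square_frame[of S, OF wf overlap] by blast
  have path: "grid_path (P v)" if "v \<in> bat_V" for v
    using assms that unfolding B1_EPG_rep_def by blast
  have "{a, b, c, d} \<subseteq> bat_V"
    unfolding abcd by simp
  then have "square_frame (P a) (P b) (P c) (P d)"
    using square_frame_if_lshape_square_frame[OF path path path path S S S S frame] by blast
  then show ?thesis
    using abcd by blast
qed

end
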